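(* For every instance $(A,C,k)$, there exists a committee satisfying EJR+ whose representation ratio is at least $\frac34-\frac{2}{\sqrt{k}}$ and whose utilitarian ratio is at least $\frac{2}{\sqrt{k}}-\frac1k$.
   Context: An instance $(A,C,k)$ consists of a finite nonempty candidate set $C$, voters $N=\{1,\dots,n\}$, approval sets $A_i\subseteq C$, and a committee size $1\le k\le|C|$. A committee is $W\subseteq C$ with $|W|\le k$. $\mathrm{sw}(W)=\sum_i|A_i\cap W|$ and $\mathrm{cov}(W)=|\{i:A_i\cap W\ne\emptyset\}|$; the utilitarian ratio is $\mathrm{sw}(W)/\max\{\mathrm{sw}(W'):|W'|=k\}$ and the representation ratio is $\mathrm{cov}(W)/\max\{\mathrm{cov}(W'):|W'|=k\}$. $W$ satisfies EJR+ if for every $\ell\in\{1,\dots,k\}$ and every $N'\subseteq N$ with $|N'|\ge\ell n/k$ and $\bigcap_{i\in N'}A_i\ne\emptyset$, either some $i\in N'$ has $|A_i\cap W|\ge\ell$ or $\bigcap_{i\in N'}A_i\subseteq W$. *)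

theory Defs
  imports Complex_Main
begin

definition is_instance :: "'c set \<Rightarrow> nat \<Rightarrow> (nat \<Rightarrow> 'c set) \<Rightarrow> nat \<Rightarrow> bool" where
  "is_instance C n A k \<longleftrightarrow> 1 \<le> n \<and> finite C \<and> C \<noteq> {} \<and> (\<forall>i\<in>{1..n}. A i \<subseteq> C)
     \<and> 1 \<le> k \<and> k \<le> card C"

definition committee :: "'c set \<Rightarrow> nat \<Rightarrow> 'c set \<Rightarrow> bool" where
  "committee C k W \<longleftrightarrow> W \<subseteq> C \<and> card W \<le> k"

definition sw :: "nat \<Rightarrow> (nat \<Rightarrow> 'c set) \<Rightarrow> 'c set \<Rightarrow> nat" where
  "sw n A W = (\<Sum>i\<in>{1..n}. card (A i \<inter> W))"

definition cov :: "nat \<Rightarrow> (nat \<Rightarrow> 'c set) \<Rightarrow> 'c set \<Rightarrow> nat" where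
  "cov n A W = card {i\<in>{1..n}. A i \<inter> W \<noteq> {}}"

definition opt_sw :: "'c set \<Rightarrow> nat \<Rightarrow> (nat \<Rightarrow> 'c set) \<Rightarrow> nat \<Rightarrow> nat" where
  "opt_sw C n A k = Max {sw n A W' | W'. W' \<subseteq> C \<and> card W' = k}"

definition opt_cov :: "'c set \<Rightarrow> nat \<Rightarrow> (nat \<Rightarrow> 'c set) \<Rightarrow> nat \<Rightarrow> nat" where
  "opt_cov C n A k = Max {cov n A W' | W'. W' \<subseteq> C \<and> card W' = k}"

text \<open>Ratios; convention: if the optimum is 0, the ratio is 1 (every committee is optimal).\<close>
definition util_ratio :: "'c set \<Rightarrow> nat \<Rightarrow> (nat \<Rightarrow> 'c set) \<Rightarrow> nat \<Rightarrow> 'c set \<Rightarrow> real" where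
  "util_ratio C n A k W = (if opt_sw C n A k = 0 then 1 else real (sw n A W) / real (opt_sw C n A k))"

definition rep_ratio :: "'c set \<Rightarrow> nat \<Rightarrow> (nat \<Rightarrow> 'c set) \<Rightarrow> nat \<Rightarrow> 'c set \<Rightarrow> real" where
  "rep_ratio C n A k W = (if opt_cov C n A k = 0 then 1 else real (cov n A W) / real (opt_cov C n A k))"

definition EJR_plus :: "nat \<Rightarrow> (nat \<Rightarrow> 'c set) \<Rightarrow> nat \<Rightarrow> 'c set \<Rightarrow> bool" where
  "EJR_plus n A k W \<longleftrightarrow>
     (\<forall>l\<in>{1..k}. \<forall>N'. N' \<subseteq> {1..n} \<and> N' \<noteq> {} \<and> real (card N') \<ge> real l * real n / real k
        \<and> (\<Inter>i\<in>N'. A i) \<noteq> {} \<longrightarrow>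
        (\<exists>i\<in>N'. card (A i \<inter> W) \<ge> l) \<or> (\<Inter>i\<in>N'. A i) \<subseteq> W)"

end

theory Submission
  imports Defs
begin

(* The committee extends the outcome W_G of a greedy EJR+ rule: for l = k, ..., 1, as long as some
   unelected candidate is approved by at least l n/k voters with fewer than l approved members,
   elect such a candidate of maximum approval score. Charging each election equally to those
   voters, nobody pays more than k/n; hence W_G has L <= k members, covers at least L n/k voters,
   and every superset of W_G satisfies EJR+ because in the end nothing is eligible.
   Let t = floor (2 sqrt k). If L + t <= k, add the t best-scoring remaining candidates, which
   secure utility ratio (2 sqrt k - 1)/k, and the best (k - L - t)-subset of a committee of
   maximum coverage; with a = L/k and r = (k - L - t)/k the coverage is at least
   ((1 - r) a + r) OPT >= (3/4 - t/k) OPT. Otherwise L/k > 1 - t/k already bounds the coverage;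
   fill up with the best-scoring candidates: since the greedy rule prefers high scores, every
   unelected candidate of score s is dominated by about s k/n members, and AM-GM yields the
   utility bound. *)

lemma exists_subset_top_values:
  fixes f :: "'a \<Rightarrow> 'b::linorder"
  assumes "finite X" "m \<le> card X"
  shows "\<exists>F\<subseteq>X. card F = m \<and> (\<forall>a\<in>F. \<forall>b\<in>X - F. f b \<le> f a)"
  using assms(2)
proof (induction m)
  case 0
  show ?case by (intro exI[of _ "{}"]) simp
next
  case (Suc m)
  then obtain F where F: "F \<subseteq> X" "card F = m" "\<forall>a\<in>F. \<forall>b\<in>X - F. f b \<le> f a"
    by auto
  have "finite F" using F(1) assms(1) by (rule finite_subset)
  have "card (X - F) = card X - m" using card_Diff_subset[OF \<open>finite F\<close> F(1)] F(2) by simp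
  then have "card (X - F) > 0" using Suc.prems by simp
  then have "X - F \<noteq> {}" using card_gt_0_iff by blast
  then have "Max (f ` (X - F)) \<in> f ` (X - F)" using assms(1) by simp
  then obtain a where a: "a \<in> X - F" "f a = Max (f ` (X - F))" by auto
  have a_max: "f b \<le> f a" if "b \<in> X - F" for b using a(2) assms(1) that by simp
  have "f b \<le> f x" if "x \<in> insert a F" "b \<in> X - insert a F" for x b
    using that F(3) a_max by auto
  moreover have "card (insert a F) = Suc m" using a(1) \<open>finite F\<close> F(2) by simp
  moreover have "insert a F \<subseteq> X" using F(1) a(1) by simp
  ultimately show ?case by blast
qed

lemma exists_remove_keeping_union:
  assumes "finite Ob" "card Ob = Suc m" "\<And>c. finite (X c)"
  shows "\<exists>c\<in>Ob. m * card (\<Union>(X ` Ob)) \<le> Suc m * card (\<Union>(X ` (Ob - {c})))"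
proof -
  define U where "U = \<Union>(X ` Ob)"
  define P where "P c = X c - \<Union>(X ` (Ob - {c}))" for c
  have "finite U" unfolding U_def using assms by auto
  have "Ob \<noteq> {}" using assms(2) by auto
  then have "Min ((\<lambda>c. card (P c)) ` Ob) \<in> (\<lambda>c. card (P c)) ` Ob" using assms(1) by simp
  then obtain c0 where "c0 \<in> Ob" "card (P c0) = Min ((\<lambda>c. card (P c)) ` Ob)" by auto
  then have c0: "c0 \<in> Ob" "\<forall>c\<in>Ob. card (P c0) \<le> card (P c)" using assms(1) by simp_all
  \<comment> \<open>the private parts P c are disjoint, so the smallest one has at most card U / Suc m points\<close>
  have "Suc m * card (P c0) = (\<Sum>c\<in>Ob. card (P c0))" using assms(2) by simp
  also have "\<dots> \<le> (\<Sum>c\<in>Ob. card (P c))" using c0(2) by (intro sum_mono) blast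
  also have "\<dots> = card (\<Union>(P ` Ob))"
    by (rule card_UN_disjoint[symmetric]) (auto simp: P_def assms)
  also have "\<dots> \<le> card U"
    by (rule card_mono[OF \<open>finite U\<close>]) (auto simp: P_def U_def)
  finally have "Suc m * card (P c0) \<le> card U" .
  moreover have "\<Union>(X ` (Ob - {c0})) = U - P c0" "P c0 \<subseteq> U"
    unfolding U_def P_def using c0(1) by blast+
  ultimately have "m * card U \<le> Suc m * card (\<Union>(X ` (Ob - {c0})))"
    using card_Diff_subset[of "P c0" U] card_mono[OF \<open>finite U\<close> \<open>P c0 \<subseteq> U\<close>]
      finite_subset[OF \<open>P c0 \<subseteq> U\<close> \<open>finite U\<close>] by (simp add: diff_mult_distrib2)
  then show ?thesis using c0(1) unfolding U_def by blast
qed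

lemma exists_subfamily_covering_fraction:
  assumes "\<And>c. finite (X c)" "finite Ob" "r \<le> card Ob"
  shows "\<exists>R\<subseteq>Ob. card R = r \<and> r * card (\<Union>(X ` Ob)) \<le> card Ob * card (\<Union>(X ` R))"
  using assms(2,3)
proof (induction "card Ob - r" arbitrary: Ob)
  case 0
  then show ?case by (intro exI[of _ Ob]) simp
next
  case (Suc d)
  then obtain m where m: "card Ob = Suc m" and "r \<le> m" and d: "d = m - r"
    by (cases "card Ob") auto
  from exists_remove_keeping_union[OF Suc.prems(1) m assms(1)] obtain c where c: "c \<in> Ob"
    and drop: "m * card (\<Union>(X ` Ob)) \<le> Suc m * card (\<Union>(X ` (Ob - {c})))" ..
  have "card (Ob - {c}) = m" using m c Suc.prems(1) by simp
  with Suc.hyps(1)[of "Ob - {c}"] Suc.prems(1) d \<open>r \<le> m\<close> obtain R where R: "R \<subseteq> Ob - {c}"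
    "card R = r" and cover: "r * card (\<Union>(X ` (Ob - {c}))) \<le> m * card (\<Union>(X ` R))"
    by auto
  show ?case
  proof (cases "m = 0")
    case True
    then show ?thesis using \<open>r \<le> m\<close> by (intro exI[of _ "{}"]) auto
  next
    case False
    have "m * (r * card (\<Union>(X ` Ob))) = r * (m * card (\<Union>(X ` Ob)))" by simp
    also have "\<dots> \<le> r * (Suc m * card (\<Union>(X ` (Ob - {c}))))"
      using drop by (rule mult_le_mono2)
    also have "\<dots> = Suc m * (r * card (\<Union>(X ` (Ob - {c}))))" by (simp only: mult.left_commute)
    also have "\<dots> \<le> Suc m * (m * card (\<Union>(X ` R)))"
      using cover by (rule mult_le_mono2)
    also have "\<dots> = m * (Suc m * card (\<Union>(X ` R)))" by (simp only: mult.left_commute)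
    finally have "r * card (\<Union>(X ` Ob)) \<le> card Ob * card (\<Union>(X ` R))"
      using False m by simp
    then show ?thesis using R by blast
  qed
qed

lemma sqrt_amgm_bound:
  fixes b k x s :: real
  assumes "0 < x" "0 < k" "s \<le> b * x" "x < s"
  shows "(2 * sqrt k - 1) * s \<le> b * s + (k - b) * x"
proof -
  have "s / x * (s - x) \<le> b * (s - x)"
    using assms by (intro mult_right_mono) (simp_all add: divide_le_eq)
  also have "s / x * (s - x) = s * s / x - s"
    using assms(1) by (simp add: field_simps)
  finally have b: "s * s / x - s \<le> b * (s - x)" .
  have "0 \<le> (sqrt k * x - s)\<^sup>2" by simp
  then have "2 * sqrt k * s * x \<le> s * s + k * x * x"
    using assms(2) by (simp add: power2_eq_square algebra_simps)
  then have "2 * sqrt k * s \<le> s * s / x + k * x"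
    using assms(1) by (simp add: field_simps)
  then show ?thesis using b by (simp add: algebra_simps)
qed

lemma sum_min_ge_sqrt_bound:
  fixes f :: "'a \<Rightarrow> real"
  assumes "finite W" "B \<subseteq> W" "0 < x" "x < s" "s \<le> real (card B) * x"
    and "\<forall>w\<in>B. s \<le> f w" "\<forall>w\<in>W. x \<le> f w"
  shows "(2 * sqrt (card W) - 1) * s \<le> (\<Sum>w\<in>W. min (f w) s)"
proof -
  have "card B \<le> card W" using assms(1,2) by (rule card_mono)
  moreover have "card B \<noteq> 0" using assms(3-5) by (intro notI) simp
  ultimately have "0 < card W" by simp
  have "(2 * sqrt (card W) - 1) * s \<le> card B * s + (card W - real (card B)) * x"
    using assms(3-5) \<open>0 < card W\<close> by (intro sqrt_amgm_bound) simp_all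
  also have "\<dots> = (\<Sum>w\<in>B. s) + (\<Sum>w\<in>W - B. x)"
    using assms(1,2) \<open>card B \<le> card W\<close> by (simp add: card_Diff_subset finite_subset of_nat_diff)
  also have "\<dots> \<le> (\<Sum>w\<in>B. min (f w) s) + (\<Sum>w\<in>W - B. min (f w) s)"
    using assms(4,6,7) by (intro add_mono sum_mono) auto
  also have "\<dots> = (\<Sum>w\<in>W. min (f w) s)"
    using assms(1,2) by (metis sum.subset_diff add.commute)
  finally show ?thesis .
qed

lemma exists_bracketing_multiple:
  fixes x s :: real
  assumes "0 < x" "x < s" "s \<le> real k * x"
  obtains l :: nat where "1 \<le> l" "l \<le> k" "real l * x \<le> s" "s < real (l + 1) * x"
proof
  define l where "l = nat \<lfloor>s / x\<rfloor>"
  have "1 < s / x" "s / x \<le> real k" using assms by (simp_all add: field_simps)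
  moreover have fl: "of_int \<lfloor>s / x\<rfloor> \<le> s / x" "s / x < of_int \<lfloor>s / x\<rfloor> + 1"
    using floor_correct by auto
  ultimately have "1 \<le> \<lfloor>s / x\<rfloor>" "\<lfloor>s / x\<rfloor> \<le> int k" by linarith+
  then have l: "real l = of_int \<lfloor>s / x\<rfloor>" "int l = \<lfloor>s / x\<rfloor>" unfolding l_def by simp_all
  then show "1 \<le> l" "l \<le> k" using \<open>1 \<le> \<lfloor>s / x\<rfloor>\<close> \<open>\<lfloor>s / x\<rfloor> \<le> int k\<close> by linarith+
  have "real l \<le> s / x" "s / x < real l + 1" using l(1) fl by linarith+
  then show "real l * x \<le> s" "s < real (l + 1) * x"
    using assms(1) by (simp_all add: pos_le_divide_eq pos_divide_less_eq add.commute)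
qed

lemma coverage_mix_bound:
  fixes a q \<Omega> c :: real
  assumes "0 \<le> a" "0 \<le> q" "a + q \<le> 1" "0 \<le> \<Omega>" "a * \<Omega> \<le> c"
  shows "(3/4 - q) * \<Omega> \<le> c + (1 - a - q) * (\<Omega> - c)"
proof -
  have "(a + q) * a + (1 - a - q) - (3/4 - q) = (a - 1/2)\<^sup>2 + q * a"
    by (simp add: power2_eq_square algebra_simps)
  moreover have "0 \<le> (a - 1/2)\<^sup>2" "0 \<le> q * a" using assms(1,2) by simp_all
  ultimately have "3/4 - q \<le> (a + q) * a + (1 - a - q)" by linarith
  then have "(3/4 - q) * \<Omega> \<le> ((a + q) * a + (1 - a - q)) * \<Omega>"
    using assms(4) by (rule mult_right_mono)
  also have "\<dots> = (a + q) * (a * \<Omega>) + (1 - a - q) * \<Omega>" by (simp add: algebra_simps)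
  also have "\<dots> \<le> (a + q) * c + (1 - a - q) * \<Omega>"
    using assms by (simp add: mult_left_mono)
  also have "\<dots> = c + (1 - a - q) * (\<Omega> - c)" by (simp add: algebra_simps)
  finally show ?thesis .
qed

lemma two_sqrt_minus_one_le:
  fixes k :: real
  assumes "0 \<le> k"
  shows "2 * sqrt k - 1 \<le> k"
proof -
  have "0 \<le> (sqrt k - 1)\<^sup>2" by simp
  then show ?thesis using assms by (simp add: power2_eq_square algebra_simps)
qed

lemma sqrt_ratio_bounds:
  assumes "1 \<le> k"
  shows "(2 / sqrt k - 1 / real k) * k = 2 * sqrt k - 1"
    and "0 \<le> 2 / sqrt k - 1 / real k" "2 / sqrt k - 1 / real k \<le> 1"
proof -
  have "1 \<le> sqrt k" "real k / sqrt k = sqrt k" using assms by (simp_all add: real_div_sqrt)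
  have "2 * sqrt k - 1 \<le> k" by (rule two_sqrt_minus_one_le) simp
  have "1 \<le> 2 * sqrt k - 1" using \<open>1 \<le> sqrt k\<close> by linarith
  have "(2 / sqrt k - 1 / real k) * k = 2 * (real k / sqrt k) - 1"
    using assms by (simp add: algebra_simps)
  then show "(2 / sqrt k - 1 / real k) * k = 2 * sqrt k - 1"
    using \<open>real k / sqrt k = sqrt k\<close> by simp
  then have tau': "2 / sqrt k - 1 / real k = (2 * sqrt k - 1) / k"
    using assms by (simp add: eq_divide_eq)
  have "0 \<le> 2 * sqrt k - 1" using \<open>1 \<le> 2 * sqrt k - 1\<close> by linarith
  then have "0 \<le> (2 * sqrt k - 1) / k" by (rule divide_nonneg_nonneg) simp
  then show "0 \<le> 2 / sqrt k - 1 / real k" unfolding tau' .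
  show "2 / sqrt k - 1 / real k \<le> 1"
    unfolding tau' using \<open>2 * sqrt k - 1 \<le> k\<close> assms by (simp add: divide_le_eq_1)
qed

lemma div_le_two_div_sqrt:
  assumes "1 \<le> k" "real t \<le> 2 * sqrt k"
  shows "real t / real k \<le> 2 / sqrt k"
proof -
  have "real t / real k \<le> 2 * sqrt k / real k" using assms(2) by (simp add: divide_right_mono)
  also have "\<dots> = 2 / sqrt k" using assms(1) real_div_sqrt[of k] by (simp add: field_simps)
  finally show ?thesis .
qed

lemma exists_nat_floor_bounds:
  fixes x :: real
  assumes "1 \<le> x"
  obtains t :: nat where "1 \<le> t" "x - 1 \<le> real t" "real t \<le> x"
proof
  have "1 \<le> \<lfloor>x\<rfloor>" using assms by simp
  then have t: "real (nat \<lfloor>x\<rfloor>) = of_int \<lfloor>x\<rfloor>" "int (nat \<lfloor>x\<rfloor>) = \<lfloor>x\<rfloor>" by simp_all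
  then show "1 \<le> nat \<lfloor>x\<rfloor>" using \<open>1 \<le> \<lfloor>x\<rfloor>\<close> by linarith
  show "real (nat \<lfloor>x\<rfloor>) \<le> x" using t(1) by simp
  show "x - 1 \<le> real (nat \<lfloor>x\<rfloor>)" using t(1) floor_correct[of x] by linarith
qed

locale approval_instance =
  fixes C :: "'c set" and n :: nat and A :: "nat \<Rightarrow> 'c set" and k :: nat
  assumes is_inst: "is_instance C n A k"
begin

lemma n_pos: "1 \<le> n" and finite_C: "finite C" and approvals_subset: "i \<in> {1..n} \<Longrightarrow> A i \<subseteq> C"
  and k_pos: "1 \<le> k" and k_le_card: "k \<le> card C"
  using is_inst unfolding is_instance_def by auto

lemma finite_approvals: "i \<in> {1..n} \<Longrightarrow> finite (A i)"
  using approvals_subset finite_C by (rule finite_subset)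

definition score :: "'c \<Rightarrow> nat" where
  "score c = card {i\<in>{1..n}. c \<in> A i}"

definition supporters :: "'c set \<Rightarrow> nat \<Rightarrow> 'c \<Rightarrow> nat set" where
  "supporters W l c = {i\<in>{1..n}. c \<in> A i \<and> card (A i \<inter> W) < l}"

definition eligible :: "'c set \<Rightarrow> nat \<Rightarrow> 'c \<Rightarrow> bool" where
  "eligible W l c \<longleftrightarrow> c \<in> C \<and> c \<notin> W \<and> real l * real n / real k \<le> real (card (supporters W l c))"

lemma finite_supporters: "finite (supporters W l c)"
  unfolding supporters_def by simp

lemma card_supporters_le_score: "card (supporters W l c) \<le> score c"
  unfolding supporters_def score_def by (rule card_mono) auto

lemma score_le_n: "score c \<le> n"
proof -
  have "score c \<le> card {1..n}" unfolding score_def by (rule card_mono) auto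
  then show ?thesis by simp
qed

lemma supporters_antimono:
  assumes "W \<subseteq> W'"
  shows "supporters W' l c \<subseteq> supporters W l c"
proof
  fix i assume i: "i \<in> supporters W' l c"
  then have "i \<in> {1..n}" unfolding supporters_def by simp
  then have "card (A i \<inter> W) \<le> card (A i \<inter> W')"
    using assms finite_approvals by (intro card_mono) auto
  then show "i \<in> supporters W l c" using i unfolding supporters_def by auto
qed

lemma eligible_antimono:
  assumes "W \<subseteq> W'" "eligible W' l c"
  shows "eligible W l c"
proof -
  have "card (supporters W' l c) \<le> card (supporters W l c)"
    using assms(1) by (intro card_mono finite_supporters supporters_antimono)
  then show ?thesis using assms unfolding eligible_def by auto
qed

lemma card_supporters_pos:
  assumes "eligible W l c" "1 \<le> l"
  shows "0 < card (supporters W l c)"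
proof -
  have "0 < real l * real n / real k" using assms(2) n_pos k_pos by simp
  then show ?thesis using assms(1) unfolding eligible_def by linarith
qed

lemma exists_max_score_eligible:
  assumes "eligible W l c"
  shows "\<exists>c0. eligible W l c0 \<and> (\<forall>c. eligible W l c \<longrightarrow> score c \<le> score c0)"
proof -
  have E: "finite {c. eligible W l c}" "{c. eligible W l c} \<noteq> {}"
    using assms finite_C by (auto simp: eligible_def intro: finite_subset)
  then have "Max (score ` {c. eligible W l c}) \<in> score ` {c. eligible W l c}" by simp
  then obtain c0 where "eligible W l c0" "score c0 = Max (score ` {c. eligible W l c})" by auto
  then show ?thesis using E(1) by auto
qed

lemma exists_represented_supporter:
  assumes "card (supporters W l c) < score c"
  shows "\<exists>y\<in>{1..n}. c \<in> A y \<and> l \<le> card (A y \<inter> W)"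
proof (rule ccontr)
  assume "\<not> ?thesis"
  then have "{i\<in>{1..n}. c \<in> A i} \<subseteq> supporters W l c"
    unfolding supporters_def by fastforce
  then have "score c \<le> card (supporters W l c)"
    unfolding score_def by (rule card_mono[OF finite_supporters])
  then show False using assms by simp
qed

lemma EJR_plus_if_none_eligible:
  assumes "W0 \<subseteq> W" and none: "\<And>l c. 1 \<le> l \<Longrightarrow> l \<le> k \<Longrightarrow> \<not> eligible W0 l c"
  shows "EJR_plus n A k W"
  unfolding EJR_plus_def
proof (intro ballI allI impI)
  fix l N' assume l: "l \<in> {1..k}" and N': "N' \<subseteq> {1..n} \<and> N' \<noteq> {}
    \<and> real l * real n / real k \<le> real (card N') \<and> (\<Inter>i\<in>N'. A i) \<noteq> {}"
  show "(\<exists>i\<in>N'. l \<le> card (A i \<inter> W)) \<or> (\<Inter>i\<in>N'. A i) \<subseteq> W"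
  proof (rule ccontr)
    assume "\<not> ?thesis"
    then have few: "\<forall>i\<in>N'. card (A i \<inter> W) < l" and "\<not> (\<Inter>i\<in>N'. A i) \<subseteq> W"
      by auto
    then obtain c where c: "c \<in> (\<Inter>i\<in>N'. A i)" "c \<notin> W" by auto
    have "N' \<subseteq> supporters W0 l c"
    proof
      fix i assume "i \<in> N'"
      then have "i \<in> {1..n}" using N' by auto
      then have "card (A i \<inter> W0) \<le> card (A i \<inter> W)"
        using assms(1) finite_approvals by (intro card_mono) auto
      then show "i \<in> supporters W0 l c"
        using few c(1) \<open>i \<in> N'\<close> \<open>i \<in> {1..n}\<close> unfolding supporters_def by fastforce
    qed
    then have "card N' \<le> card (supporters W0 l c)" by (rule card_mono[OF finite_supporters])
    moreover have "c \<in> C" using c(1) N' approvals_subset by blast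
    ultimately have "eligible W0 l c" using N' c(2) assms(1) unfolding eligible_def by auto
    then show False using none l by auto
  qed
qed

lemma quota_mono: "a \<le> b \<Longrightarrow> real a * real n / real k \<le> real b * real n / real k"
  by (intro divide_right_mono mult_right_mono) simp_all

lemma quota_strict_mono: "a < b \<Longrightarrow> real a * real n / real k < real b * real n / real k"
  using n_pos k_pos by (intro divide_strict_right_mono mult_strict_right_mono) simp_all

lemma quota_le_iff: "real a * real n / real k \<le> real b * real n / real k \<longleftrightarrow> a \<le> b"
  using quota_mono quota_strict_mono by (meson not_le)

lemma cov_mono: "W \<subseteq> W' \<Longrightarrow> cov n A W \<le> cov n A W'"
  unfolding cov_def by (rule card_mono) auto

lemma cov_le_n: "cov n A W \<le> n"
proof -
  have "cov n A W \<le> card {1..n}" unfolding cov_def by (rule card_mono) auto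
  then show ?thesis by simp
qed

lemma sw_eq_sum_score:
  assumes "finite W"
  shows "sw n A W = (\<Sum>c\<in>W. score c)"
proof -
  have "sw n A W = (\<Sum>i\<in>{1..n}. \<Sum>c\<in>W. if c \<in> A i then 1 else 0)"
    unfolding sw_def using assms by (intro sum.cong refl) (simp add: sum.If_cases Int_commute)
  also have "\<dots> = (\<Sum>c\<in>W. \<Sum>i\<in>{1..n}. if c \<in> A i then 1 else 0)" by (rule sum.swap)
  also have "\<dots> = (\<Sum>c\<in>W. score c)"
    unfolding score_def by (intro sum.cong refl) (simp flip: sum.inter_filter)
  finally show ?thesis .
qed

lemma Max_over_committees_attained:
  fixes f :: "'c set \<Rightarrow> nat"
  shows "\<exists>W. W \<subseteq> C \<and> card W = k \<and> Max {f W' | W'. W' \<subseteq> C \<and> card W' = k} = f W"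
proof -
  let ?S = "{W'. W' \<subseteq> C \<and> card W' = k}"
  have "{f W' | W'. W' \<subseteq> C \<and> card W' = k} = f ` ?S" by auto
  moreover have "finite ?S" using finite_C by simp
  moreover have "?S \<noteq> {}" using obtain_subset_with_card_n[OF k_le_card] by blast
  ultimately have "Max {f W' | W'. W' \<subseteq> C \<and> card W' = k} \<in> f ` ?S" by simp
  then show ?thesis by auto
qed

lemma opt_sw_le:
  assumes "W \<subseteq> C" "\<forall>c\<in>C - W. real (score c) \<le> s" "0 \<le> s"
  shows "real (opt_sw C n A k) \<le> real k * s + (\<Sum>w\<in>W. max (real (score w) - s) 0)"
proof -
  obtain Ob where Ob: "Ob \<subseteq> C" "card Ob = k" "opt_sw C n A k = sw n A Ob"
    using Max_over_committees_attained[of "sw n A"] unfolding opt_sw_def by blast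
  have "finite Ob" "finite W" using Ob(1) assms(1) finite_C by (auto intro: finite_subset)
  let ?excess = "\<lambda>c. max (real (score c) - s) 0"
  have "real (opt_sw C n A k) = (\<Sum>c\<in>Ob. real (score c))"
    using Ob(3) sw_eq_sum_score[OF \<open>finite Ob\<close>] by simp
  also have "\<dots> \<le> (\<Sum>c\<in>Ob. s + (if c \<in> W then ?excess c else 0))"
    using assms(2) Ob(1) by (intro sum_mono) auto
  also have "\<dots> = real k * s + (\<Sum>c\<in>Ob \<inter> W. ?excess c)"
    using Ob(2) \<open>finite Ob\<close> by (simp add: sum.distrib sum.If_cases Int_def)
  also have "\<dots> \<le> real k * s + (\<Sum>w\<in>W. ?excess w)"
    using \<open>finite W\<close> by (intro add_left_mono sum_mono2) auto
  finally show ?thesis .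
qed

lemma util_ratio_ge:
  assumes "W \<subseteq> C" "\<forall>c\<in>C - W. real (score c) \<le> s" "0 \<le> s" "0 \<le> \<tau>" "\<tau> \<le> 1"
    and "\<tau> * real k * s \<le> (\<Sum>w\<in>W. min (real (score w)) s)"
  shows "\<tau> \<le> util_ratio C n A k W"
proof -
  let ?E = "\<Sum>w\<in>W. max (real (score w) - s) 0"
  have "finite W" using assms(1) finite_C by (rule finite_subset)
  have "0 \<le> ?E" by (intro sum_nonneg) simp
  have "real (sw n A W) = (\<Sum>w\<in>W. real (score w))"
    using sw_eq_sum_score[OF \<open>finite W\<close>] by simp
  also have "\<dots> = (\<Sum>w\<in>W. min (real (score w)) s + max (real (score w) - s) 0)"
    by (intro sum.cong refl) (simp add: min_def max_def)
  also have "\<dots> = (\<Sum>w\<in>W. min (real (score w)) s) + ?E" by (rule sum.distrib)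
  finally have sw: "real (sw n A W) = (\<Sum>w\<in>W. min (real (score w)) s) + ?E" .
  have "\<tau> * real (opt_sw C n A k) \<le> \<tau> * (real k * s + ?E)"
    using opt_sw_le[OF assms(1-3)] assms(4) by (rule mult_left_mono)
  also have "\<dots> \<le> (\<Sum>w\<in>W. min (real (score w)) s) + ?E"
    using assms(6) mult_right_mono[OF assms(5) \<open>0 \<le> ?E\<close>] by (simp add: algebra_simps)
  finally have "\<tau> * real (opt_sw C n A k) \<le> real (sw n A W)" unfolding sw .
  then show ?thesis using assms(5) unfolding util_ratio_def by (auto simp: le_divide_eq)
qed

lemma rep_ratio_ge:
  assumes "\<rho> \<le> 1" "\<rho> * real (opt_cov C n A k) \<le> real (cov n A W)"
  shows "\<rho> \<le> rep_ratio C n A k W"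
  using assms unfolding rep_ratio_def by (auto simp: le_divide_eq)

lemma util_ratio_ge_top_block:
  assumes "W \<subseteq> C" "F \<subseteq> W" "F \<noteq> {}" "\<forall>c\<in>C - W. \<forall>w\<in>F. score c \<le> score w"
    and "2 * sqrt k - 1 \<le> real (card F)"
  shows "2 / sqrt k - 1 / real k \<le> util_ratio C n A k W"
proof -
  have "finite W" using assms(1) finite_C by (rule finite_subset)
  with assms(2) have "finite F" by (rule finite_subset)
  define s where "s = real (Min (score ` F))"
  have s_le: "\<forall>w\<in>F. s \<le> real (score w)" unfolding s_def using \<open>finite F\<close> by simp
  have "Min (score ` F) \<in> score ` F" using \<open>finite F\<close> assms(3) by simp
  then obtain a where "a \<in> F" "s = real (score a)" unfolding s_def by auto
  then have outside: "\<forall>c\<in>C - W. real (score c) \<le> s" using assms(4) by simp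
  have "(2 / sqrt k - 1 / real k) * real k * s = (2 * sqrt k - 1) * s"
    using sqrt_ratio_bounds(1) k_pos by simp
  also have "\<dots> \<le> real (card F) * s" using assms(5) s_def by (intro mult_right_mono) simp_all
  also have "\<dots> = (\<Sum>w\<in>F. min (real (score w)) s)" using s_le by (simp add: min_absorb2)
  also have "\<dots> \<le> (\<Sum>w\<in>W. min (real (score w)) s)"
    using \<open>finite W\<close> assms(2) s_def by (intro sum_mono2) auto
  finally show ?thesis
    using util_ratio_ge[OF assms(1) outside] sqrt_ratio_bounds(2,3) k_pos s_def by simp
qed

lemma exists_subfamily_extending_cov:
  assumes "finite Ob" "r \<le> card Ob"
  shows "\<exists>R\<subseteq>Ob. card R = r \<and> real (cov n A W0)
    + real r / real (card Ob) * (real (cov n A Ob) - real (cov n A W0)) \<le> real (cov n A (W0 \<union> R))"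
proof -
  define V0 where "V0 = {i\<in>{1..n}. A i \<inter> W0 \<noteq> {}}"
  define X where "X c = {i\<in>{1..n} - V0. c \<in> A i}" for c
  obtain R where R: "R \<subseteq> Ob" "card R = r"
    and frac: "r * card (\<Union>(X ` Ob)) \<le> card Ob * card (\<Union>(X ` R))"
    using exists_subfamily_covering_fraction[of X, OF _ assms] unfolding X_def by auto
  have "finite (\<Union>(X ` S))" for S by (rule finite_subset[of _ "{1..n}"]) (auto simp: X_def)
  moreover have "finite V0" unfolding V0_def by simp
  ultimately have "finite (\<Union>(X ` Ob))" "finite (\<Union>(X ` R))" "finite V0" by blast+
  have "cov n A Ob \<le> card (V0 \<union> \<Union>(X ` Ob))"
    unfolding cov_def using \<open>finite V0\<close> \<open>finite (\<Union>(X ` Ob))\<close>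
    by (intro card_mono) (auto simp: V0_def X_def)
  also have "\<dots> \<le> card V0 + card (\<Union>(X ` Ob))" by (rule card_Un_le)
  finally have Ob_cov: "real (cov n A Ob) - real (cov n A W0) \<le> real (card (\<Union>(X ` Ob)))"
    unfolding cov_def V0_def by simp
  have "card V0 + card (\<Union>(X ` R)) = card (V0 \<union> \<Union>(X ` R))"
    using \<open>finite V0\<close> \<open>finite (\<Union>(X ` R))\<close> by (intro card_Un_disjoint[symmetric]) (auto simp: X_def)
  also have "\<dots> \<le> cov n A (W0 \<union> R)"
    unfolding cov_def by (intro card_mono) (auto simp: V0_def X_def)
  finally have R_cov: "real (cov n A W0) + real (card (\<Union>(X ` R))) \<le> real (cov n A (W0 \<union> R))"
    unfolding cov_def V0_def by linarith
  have "real r * real (card (\<Union>(X ` Ob))) \<le> real (card Ob) * real (card (\<Union>(X ` R)))"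
    using of_nat_mono[OF frac] by simp
  then have "real r / real (card Ob) * real (card (\<Union>(X ` Ob))) \<le> real (card (\<Union>(X ` R)))"
    by (cases "card Ob = 0") (simp_all add: field_simps)
  moreover have "real r / real (card Ob) * (real (cov n A Ob) - real (cov n A W0))
      \<le> real r / real (card Ob) * real (card (\<Union>(X ` Ob)))"
    using Ob_cov by (intro mult_left_mono) simp_all
  ultimately show ?thesis using R R_cov by (intro exI[of _ R]) auto
qed

text \<open>A greedy run is a prefix of an execution of the rule, step j electing cs j at level ls j.
  It is exhausted above l when no level l' > l can elect anything more: nothing is eligible at l'
  at the end, nor at any step already below l'.\<close>

definition greedy_run :: "(nat \<Rightarrow> 'c) \<Rightarrow> (nat \<Rightarrow> nat) \<Rightarrow> nat \<Rightarrow> bool" where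
  "greedy_run cs ls L \<longleftrightarrow>
    (\<forall>j<L. 1 \<le> ls j \<and> ls j \<le> k \<and> eligible (cs ` {..<j}) (ls j) (cs j)
       \<and> (\<forall>c. eligible (cs ` {..<j}) (ls j) c \<longrightarrow> score c \<le> score (cs j)))
    \<and> (\<forall>j j'. j \<le> j' \<longrightarrow> j' < L \<longrightarrow> ls j' \<le> ls j)"

definition exhausted_above :: "nat \<Rightarrow> (nat \<Rightarrow> 'c) \<Rightarrow> (nat \<Rightarrow> nat) \<Rightarrow> nat \<Rightarrow> bool" where
  "exhausted_above l cs ls L \<longleftrightarrow> (\<forall>j\<le>L. \<forall>l'. l < l' \<longrightarrow> l' \<le> k \<longrightarrow> (j < L \<longrightarrow> ls j < l')
     \<longrightarrow> (\<forall>c. \<not> eligible (cs ` {..<j}) l' c))"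

definition payers :: "(nat \<Rightarrow> 'c) \<Rightarrow> (nat \<Rightarrow> nat) \<Rightarrow> nat \<Rightarrow> nat set" where
  "payers cs ls j = supporters (cs ` {..<j}) (ls j) (cs j)"

definition paid_steps :: "(nat \<Rightarrow> 'c) \<Rightarrow> (nat \<Rightarrow> nat) \<Rightarrow> nat \<Rightarrow> nat \<Rightarrow> nat set" where
  "paid_steps cs ls L i = {j. j < L \<and> i \<in> payers cs ls j}"

definition payment :: "(nat \<Rightarrow> 'c) \<Rightarrow> (nat \<Rightarrow> nat) \<Rightarrow> nat \<Rightarrow> nat \<Rightarrow> real" where
  "payment cs ls L i = (\<Sum>j\<in>paid_steps cs ls L i. 1 / real (card (payers cs ls j)))"

context
  fixes cs :: "nat \<Rightarrow> 'c" and ls :: "nat \<Rightarrow> nat" and L :: nat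
  assumes run: "greedy_run cs ls L"
begin

lemma run_level: "j < L \<Longrightarrow> 1 \<le> ls j \<and> ls j \<le> k"
  using run unfolding greedy_run_def by auto

lemma run_eligible: "j < L \<Longrightarrow> eligible (cs ` {..<j}) (ls j) (cs j)"
  using run unfolding greedy_run_def by auto

lemma run_max_score: "j < L \<Longrightarrow> eligible (cs ` {..<j}) (ls j) c \<Longrightarrow> score c \<le> score (cs j)"
  using run unfolding greedy_run_def by auto

lemma run_level_antimono: "j \<le> j' \<Longrightarrow> j' < L \<Longrightarrow> ls j' \<le> ls j"
  using run unfolding greedy_run_def by auto

lemma inj_on_run: "inj_on cs {..<L}"
proof (rule inj_onI)
  have fresh: "cs j \<notin> cs ` {..<j}" if "j < L" for j
    using run_eligible[OF that] unfolding eligible_def by simp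
  fix x y assume "x \<in> {..<L}" "y \<in> {..<L}" "cs x = cs y"
  then show "x = y"
    using fresh by (metis image_eqI lessThan_iff linorder_neqE_nat)
qed

lemma card_run: "card (cs ` {..<L}) = L"
  using inj_on_run by (simp add: card_image)

lemma run_subset: "cs ` {..<L} \<subseteq> C"
  using run_eligible unfolding eligible_def by auto

lemma card_payers_ge: "j < L \<Longrightarrow> real (ls j) * real n / real k \<le> real (card (payers cs ls j))"
  using run_eligible unfolding payers_def eligible_def by auto

lemma card_payers_pos: "j < L \<Longrightarrow> 0 < card (payers cs ls j)"
  using card_supporters_pos run_eligible run_level unfolding payers_def by blast

lemma card_payers_le_score: "card (payers cs ls j) \<le> score (cs j)"
  unfolding payers_def by (rule card_supporters_le_score)

lemma score_run_ge:
  assumes "j < L"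
  shows "real n / real k \<le> real (score (cs j))"
proof -
  have "real n / real k = real 1 * real n / real k" by simp
  also have "\<dots> \<le> real (ls j) * real n / real k" using run_level[OF assms] by (intro quota_mono) simp
  also have "\<dots> \<le> real (card (payers cs ls j))" using assms by (rule card_payers_ge)
  also have "\<dots> \<le> real (score (cs j))" using card_payers_le_score by simp
  finally show ?thesis .
qed

lemma finite_paid_steps: "finite (paid_steps cs ls L i)"
  unfolding paid_steps_def by simp

text \<open>The candidates elected at the earlier steps paid for by i are approved by i and precede
  the last such step, at which i still had fewer approved members than that step's level.\<close>

lemma card_paid_steps_le_level:
  assumes i: "i \<in> {1..n}" and j: "j \<in> paid_steps cs ls L i"
  shows "card (paid_steps cs ls L i) \<le> ls j"
proof -
  define J where "J = paid_steps cs ls L i"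
  define jL where "jL = Max J"
  have "J \<noteq> {}" "finite J" using j finite_paid_steps unfolding J_def by auto
  then have jL: "jL \<in> J" "\<forall>j'\<in>J. j' \<le> jL" unfolding jL_def by simp_all
  then have "jL < L" "i \<in> payers cs ls jL" unfolding J_def paid_steps_def by auto
  then have few: "card (A i \<inter> cs ` {..<jL}) < ls jL" unfolding payers_def supporters_def by auto
  have "cs ` (J - {jL}) \<subseteq> A i \<inter> cs ` {..<jL}"
    using jL(2) unfolding J_def paid_steps_def payers_def supporters_def by fastforce
  moreover have "inj_on cs (J - {jL})"
    using inj_on_run by (rule inj_on_subset) (auto simp: J_def paid_steps_def)
  ultimately have "card (J - {jL}) \<le> card (A i \<inter> cs ` {..<jL})"
    using finite_approvals[OF i] by (metis card_image card_mono finite_Int)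
  then have "card J \<le> ls jL" using few jL(1) \<open>finite J\<close> by (simp add: card_Diff_singleton)
  also have "ls jL \<le> ls j" using jL(2) j \<open>jL < L\<close> unfolding J_def by (simp add: run_level_antimono)
  finally show ?thesis unfolding J_def .
qed

lemma inverse_card_payers_le:
  assumes i: "i \<in> {1..n}" and j: "j \<in> paid_steps cs ls L i"
  shows "1 / real (card (payers cs ls j)) \<le> real k / (real (card (paid_steps cs ls L i)) * real n)"
proof -
  define m where "m = card (paid_steps cs ls L i)"
  have "0 < m" using j finite_paid_steps unfolding m_def by (auto simp: card_gt_0_iff)
  have "j < L" using j unfolding paid_steps_def by simp
  have "real m * real n / real k \<le> real (ls j) * real n / real k"
    using card_paid_steps_le_level[OF assms] unfolding m_def by (rule quota_mono)
  also have "\<dots> \<le> real (card (payers cs ls j))" using \<open>j < L\<close> by (rule card_payers_ge)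
  finally have "inverse (real (card (payers cs ls j))) \<le> inverse (real m * real n / real k)"
    using \<open>0 < m\<close> n_pos k_pos by (intro le_imp_inverse_le) simp_all
  then show ?thesis unfolding m_def by (simp add: inverse_eq_divide)
qed

lemma payment_le:
  assumes "i \<in> {1..n}"
  shows "payment cs ls L i \<le> real k / real n"
proof (cases "paid_steps cs ls L i = {}")
  case True
  then show ?thesis unfolding payment_def by simp
next
  case False
  define m where "m = card (paid_steps cs ls L i)"
  have "0 < m" using False finite_paid_steps unfolding m_def by (auto simp: card_gt_0_iff)
  have "payment cs ls L i \<le> (\<Sum>j\<in>paid_steps cs ls L i. real k / (real m * real n))"
    unfolding payment_def m_def using assms by (intro sum_mono inverse_card_payers_le)
  also have "\<dots> = real k / real n" using \<open>0 < m\<close> unfolding m_def by simp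
  finally show ?thesis .
qed

lemma sum_payment: "(\<Sum>i\<in>{1..n}. payment cs ls L i) = real L"
proof -
  let ?share = "\<lambda>j i. if i \<in> payers cs ls j then 1 / real (card (payers cs ls j)) else 0"
  have steps: "paid_steps cs ls L i = {j\<in>{..<L}. i \<in> payers cs ls j}" for i
    unfolding paid_steps_def by auto
  have "payment cs ls L i = (\<Sum>j<L. ?share j i)" for i
    unfolding payment_def steps by (rule sum.inter_filter) simp
  then have "(\<Sum>i\<in>{1..n}. payment cs ls L i) = (\<Sum>i\<in>{1..n}. \<Sum>j<L. ?share j i)" by simp
  also have "\<dots> = (\<Sum>j<L. \<Sum>i\<in>{1..n}. ?share j i)" by (rule sum.swap)
  also have "\<dots> = (\<Sum>j<L. 1)"
  proof (intro sum.cong refl)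
    fix j assume "j \<in> {..<L}"
    have "payers cs ls j \<subseteq> {1..n}" unfolding payers_def supporters_def by auto
    then have "{i\<in>{1..n}. i \<in> payers cs ls j} = payers cs ls j" by auto
    then have "(\<Sum>i\<in>{1..n}. ?share j i) = (\<Sum>i\<in>payers cs ls j. 1 / real (card (payers cs ls j)))"
      by (simp flip: sum.inter_filter)
    also have "\<dots> = 1" using card_payers_pos \<open>j \<in> {..<L}\<close> by simp
    finally show "(\<Sum>i\<in>{1..n}. ?share j i) = 1" .
  qed
  finally show ?thesis by simp
qed

lemma run_length_le: "L \<le> k"
proof -
  have "real L \<le> (\<Sum>i\<in>{1..n}. real k / real n)"
    unfolding sum_payment[symmetric] by (intro sum_mono payment_le)
  also have "\<dots> = real k" using n_pos by simp
  finally show ?thesis by simp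
qed

lemma cov_run_ge: "real L * real n / real k \<le> real (cov n A (cs ` {..<L}))"
proof -
  define V where "V = {i\<in>{1..n}. A i \<inter> cs ` {..<L} \<noteq> {}}"
  have "paid_steps cs ls L i = {}" if "i \<in> {1..n} - V" for i
    using that unfolding V_def paid_steps_def payers_def supporters_def by auto
  then have "real L = (\<Sum>i\<in>V. payment cs ls L i)"
    unfolding sum_payment[symmetric] payment_def
    by (intro sum.mono_neutral_right) (auto simp: V_def)
  also have "\<dots> \<le> (\<Sum>i\<in>V. real k / real n)"
    by (intro sum_mono payment_le) (auto simp: V_def)
  also have "\<dots> = real (cov n A (cs ` {..<L})) * real k / real n"
    unfolding cov_def V_def by simp
  finally show ?thesis using n_pos k_pos by (simp add: field_simps)
qed

text \<open>If k candidates are elected, the total payment k forces every voter to pay exactly k/n,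
  so the bound of inverse_card_payers_le is attained at every step.\<close>

lemma payment_eq_if_full:
  assumes "L = k" "i \<in> {1..n}"
  shows "payment cs ls L i = real k / real n"
proof -
  have sum0: "(\<Sum>i\<in>{1..n}. real k / real n - payment cs ls L i) = 0"
    using sum_payment assms(1) n_pos by (simp add: sum_subtractf)
  have nonneg: "0 \<le> real k / real n - payment cs ls L i" if "i \<in> {1..n}" for i
    using payment_le[OF that] by simp
  have "\<forall>i\<in>{1..n}. real k / real n - payment cs ls L i = 0"
    by (rule iffD1[OF sum_nonneg_eq_0_iff[OF finite_atLeastAtMost nonneg] sum0])
  then show ?thesis using assms(2) by simp
qed

lemma paid_steps_nonempty_if_full:
  assumes "L = k" "i \<in> {1..n}"
  shows "paid_steps cs ls L i \<noteq> {}"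
  using payment_eq_if_full[OF assms] n_pos k_pos unfolding payment_def by auto

lemma card_payers_if_full:
  assumes "L = k" "i \<in> {1..n}" "j \<in> paid_steps cs ls L i"
  shows "real (card (payers cs ls j)) = real (card (paid_steps cs ls L i)) * real n / real k"
proof -
  define m where "m = card (paid_steps cs ls L i)"
  let ?slack = "\<lambda>j. real k / (real m * real n) - 1 / real (card (payers cs ls j))"
  have "0 < m" using assms(3) finite_paid_steps unfolding m_def by (auto simp: card_gt_0_iff)
  have "(\<Sum>j\<in>paid_steps cs ls L i. ?slack j) = real m * (real k / (real m * real n)) - payment cs ls L i"
    unfolding payment_def m_def by (simp add: sum_subtractf)
  also have "\<dots> = 0" using payment_eq_if_full[OF assms(1,2)] \<open>0 < m\<close> by simp
  finally have "?slack j = 0"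
    using inverse_card_payers_le[OF assms(2)] assms(3) finite_paid_steps
    by (simp add: sum_nonneg_eq_0_iff m_def)
  moreover have "0 < card (payers cs ls j)"
    using assms(3) card_payers_pos unfolding paid_steps_def by simp
  ultimately show ?thesis using \<open>0 < m\<close> n_pos k_pos unfolding m_def by (simp add: field_simps)
qed

lemma score_le_before_drop:
  assumes "j < L" "l \<le> ls j" "eligible (cs ` {..<j}) l c"
    and "real (score c) < real (l + 1) * real n / real k"
  shows "score c \<le> score (cs j)"
proof (cases "ls j = l")
  case True
  then show ?thesis using assms(1,3) run_max_score by simp
next
  case False
  then have "real (l + 1) * real n / real k \<le> real (ls j) * real n / real k"
    using assms(2) by (intro quota_mono) simp
  also have "\<dots> \<le> real (card (payers cs ls j))" using assms(1) by (rule card_payers_ge)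
  also have "\<dots> \<le> real (score (cs j))" using card_payers_le_score by simp
  finally show ?thesis using assms(4) by simp
qed

lemma exists_tight_paid_step:
  assumes "L = k" "i \<in> {1..n}"
  shows "\<exists>j<L. i \<in> payers cs ls j \<and> ls j \<le> card (paid_steps cs ls L i)
    \<and> real (card (payers cs ls j)) = real (card (paid_steps cs ls L i)) * real n / real k"
proof -
  obtain j where j: "j \<in> paid_steps cs ls L i"
    using paid_steps_nonempty_if_full[OF assms] by blast
  then have "j < L" "i \<in> payers cs ls j" unfolding paid_steps_def by auto
  moreover have size: "real (card (payers cs ls j)) = real (card (paid_steps cs ls L i)) * real n / real k"
    using card_payers_if_full[OF assms j] .
  moreover have "ls j \<le> card (paid_steps cs ls L i)"
    using card_payers_ge[OF \<open>j < L\<close>] size by (simp add: quota_le_iff)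
  ultimately show ?thesis by blast
qed

lemma paid_steps_dominate:
  assumes "i \<in> {1..n}" "l + 1 \<le> card (paid_steps cs ls L i)"
    and "real (score c) < real (l + 1) * real n / real k"
  shows "\<exists>H\<subseteq>cs ` {..<L}. (\<forall>w\<in>H. score c \<le> score w) \<and> l + 1 \<le> card H"
proof (intro exI conjI)
  let ?J = "paid_steps cs ls L i"
  show "cs ` ?J \<subseteq> cs ` {..<L}" unfolding paid_steps_def by auto
  have "inj_on cs ?J" using inj_on_run by (rule inj_on_subset) (auto simp: paid_steps_def)
  then show "l + 1 \<le> card (cs ` ?J)" using assms(2) by (simp add: card_image)
  show "\<forall>w\<in>cs ` ?J. score c \<le> score w"
  proof
    fix w assume "w \<in> cs ` ?J"
    then obtain j where j: "j \<in> ?J" "w = cs j" by auto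
    have "real (l + 1) * real n / real k \<le> real (ls j) * real n / real k"
      using assms(2) card_paid_steps_le_level[OF assms(1) j(1)] by (intro quota_mono) simp
    also have "\<dots> \<le> real (card (payers cs ls j))"
      using j(1) by (intro card_payers_ge) (auto simp: paid_steps_def)
    also have "\<dots> \<le> real (score w)" using card_payers_le_score j(2) by simp
    finally show "score c \<le> score w" using assms(3) by simp
  qed
qed

lemma cov_run_ratio: "real L / real k * real (opt_cov C n A k) \<le> real (cov n A (cs ` {..<L}))"
proof -
  obtain Oc where "opt_cov C n A k = cov n A Oc"
    using Max_over_committees_attained[of "cov n A"] unfolding opt_cov_def by blast
  then have "real L / real k * real (opt_cov C n A k) \<le> real L / real k * real n"
    using cov_le_n[of Oc] by (intro mult_left_mono) simp_all
  also have "\<dots> \<le> real (cov n A (cs ` {..<L}))" using cov_run_ge by simp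
  finally show ?thesis .
qed

lemma exists_subfamily_rep_ratio_with_room:
  assumes "L + t \<le> k" "real t \<le> 2 * sqrt k"
  obtains R where "R \<subseteq> C" "card R = k - L - t"
    and "\<And>W. cs ` {..<L} \<union> R \<subseteq> W \<Longrightarrow> 3/4 - 2 / sqrt k \<le> rep_ratio C n A k W"
proof -
  let ?\<Omega> = "real (opt_cov C n A k)" and ?c0 = "real (cov n A (cs ` {..<L}))"
  obtain Oc where Oc: "Oc \<subseteq> C" "card Oc = k" "opt_cov C n A k = cov n A Oc"
    using Max_over_committees_attained[of "cov n A"] unfolding opt_cov_def by blast
  have "finite Oc" "k - L - t \<le> card Oc" using Oc(1,2) finite_C by (auto intro: finite_subset)
  from exists_subfamily_extending_cov[OF this, of "cs ` {..<L}", unfolded Oc(2) Oc(3)[symmetric]]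
  obtain R where R: "R \<subseteq> Oc" "card R = k - L - t"
    and cov: "?c0 + real (k - L - t) / real k * (?\<Omega> - ?c0) \<le> real (cov n A (cs ` {..<L} \<union> R))"
    by blast
  have rest: "real (k - L - t) / real k = 1 - real L / real k - real t / real k"
    using assms(1) k_pos by (simp add: of_nat_diff diff_divide_distrib add_divide_distrib)
  have "0 \<le> real (k - L - t) / real k" by simp
  then have "(3/4 - real t / real k) * ?\<Omega>
      \<le> ?c0 + (1 - real L / real k - real t / real k) * (?\<Omega> - ?c0)"
    unfolding rest by (intro coverage_mix_bound cov_run_ratio) simp_all
  then have "(3/4 - real t / real k) * ?\<Omega> \<le> real (cov n A (cs ` {..<L} \<union> R))"
    using cov unfolding rest by linarith
  moreover have "(3/4 - 2 / sqrt k) * ?\<Omega> \<le> (3/4 - real t / real k) * ?\<Omega>"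
    using div_le_two_div_sqrt[OF k_pos assms(2)] by (intro mult_right_mono) simp_all
  moreover have "3/4 - 2 / sqrt k \<le> 1"
  proof -
    have "0 \<le> 2 / sqrt k" by simp
    then show ?thesis by linarith
  qed
  ultimately have "3/4 - 2 / sqrt k \<le> rep_ratio C n A k W" if "cs ` {..<L} \<union> R \<subseteq> W" for W
    using cov_mono[OF that] by (intro rep_ratio_ge) simp_all
  then show ?thesis using that R Oc(1) by blast
qed

lemma rep_ratio_ge_without_room:
  assumes "k < L + t" "real t \<le> 2 * sqrt k" "cs ` {..<L} \<subseteq> W"
  shows "3/4 - 2 / sqrt k \<le> rep_ratio C n A k W"
proof (rule rep_ratio_ge)
  have "0 < real k" using k_pos by simp
  have "(real k - real t) / real k < real L / real k"
    using assms(1) \<open>0 < real k\<close> by (intro divide_strict_right_mono) simp_all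
  then have "1 - real t / real k < real L / real k"
    using \<open>0 < real k\<close> by (simp add: diff_divide_distrib)
  moreover have "real t / real k \<le> 2 / sqrt k" using div_le_two_div_sqrt[OF k_pos assms(2)] .
  ultimately have ratio: "3/4 - 2 / sqrt k \<le> real L / real k" by linarith
  then have "(3/4 - 2 / sqrt k) * real (opt_cov C n A k) \<le> real L / real k * real (opt_cov C n A k)"
    by (rule mult_right_mono) simp
  also have "\<dots> \<le> real (cov n A (cs ` {..<L}))" by (rule cov_run_ratio)
  also have "\<dots> \<le> real (cov n A W)" using cov_mono[OF assms(3)] by simp
  finally show "(3/4 - 2 / sqrt k) * real (opt_cov C n A k) \<le> real (cov n A W)" .
  have "real L / real k \<le> 1" using run_length_le \<open>0 < real k\<close> by simp
  with ratio show "3/4 - 2 / sqrt k \<le> 1" by linarith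
qed

lemma card_run_union_fill:
  assumes "F \<subseteq> C - cs ` {..<L}" "card F = k - L"
  shows "card (cs ` {..<L} \<union> F) = k"
proof -
  have "finite F" using finite_subset[OF assms(1)] finite_C by simp
  then show ?thesis
    using assms card_run run_length_le by (subst card_Un_disjoint) auto
qed

context
  assumes exhausted: "exhausted_above 0 cs ls L"
begin

lemma not_eligible_final: "1 \<le> l \<Longrightarrow> l \<le> k \<Longrightarrow> \<not> eligible (cs ` {..<L}) l c"
  using exhausted[unfolded exhausted_above_def, rule_format, of L l] by simp

lemma EJR_plus_superset:
  assumes "cs ` {..<L} \<subseteq> W"
  shows "EJR_plus n A k W"
  using assms not_eligible_final by (rule EJR_plus_if_none_eligible)

lemma exists_blocking_prefix:
  assumes "c \<in> C" "c \<notin> cs ` {..<L}" "1 \<le> l" "l \<le> k"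
    and "real l * real n / real k \<le> real (score c)" "real (score c) < real (l + 1) * real n / real k"
  obtains j0 y where "j0 \<le> L" "y \<in> {1..n}" "c \<in> A y" "l \<le> card (A y \<inter> cs ` {..<j0})"
    and "\<And>j. j < j0 \<Longrightarrow> l \<le> ls j \<and> score c \<le> score (cs j)"
proof -
  define P where "P j \<longleftrightarrow> j = L \<or> ls j < l \<or> \<not> eligible (cs ` {..<j}) l c" for j
  define j0 where "j0 = (LEAST j. P j)"
  have "P L" unfolding P_def by simp
  then have "P j0" "j0 \<le> L" unfolding j0_def by (auto intro: LeastI Least_le)
  have "\<not> eligible (cs ` {..<j0}) l c"
    using \<open>P j0\<close> exhausted[unfolded exhausted_above_def, rule_format, of j0 l] \<open>j0 \<le> L\<close> assms(3,4)
    unfolding P_def by auto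
  moreover have "c \<notin> cs ` {..<j0}" using assms(2) \<open>j0 \<le> L\<close> by auto
  ultimately have "card (supporters (cs ` {..<j0}) l c) < score c"
    using assms(1,5) unfolding eligible_def by simp
  then obtain y where "y \<in> {1..n}" "c \<in> A y" "l \<le> card (A y \<inter> cs ` {..<j0})"
    using exists_represented_supporter by blast
  moreover have "l \<le> ls j \<and> score c \<le> score (cs j)" if "j < j0" for j
  proof -
    have "j < L" "l \<le> ls j" "eligible (cs ` {..<j}) l c"
      using not_less_Least[OF that[unfolded j0_def]] that \<open>j0 \<le> L\<close> unfolding P_def by auto
    then show ?thesis using score_le_before_drop[OF _ _ _ assms(6)] by blast
  qed
  ultimately show ?thesis using that \<open>j0 \<le> L\<close> by blast
qed

lemma exists_large_dominating_set_if_full: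
  assumes "L = k" "c \<in> C" "c \<notin> cs ` {..<L}" "1 \<le> l" "l \<le> k"
    and "real l * real n / real k < real (score c)" "real (score c) < real (l + 1) * real n / real k"
  shows "\<exists>H\<subseteq>cs ` {..<L}. (\<forall>w\<in>H. score c \<le> score w) \<and> l + 1 \<le> card H"
proof -
  obtain j0 y where j0: "j0 \<le> L" and y: "y \<in> {1..n}" "l \<le> card (A y \<inter> cs ` {..<j0})"
    and before: "\<And>j. j < j0 \<Longrightarrow> l \<le> ls j \<and> score c \<le> score (cs j)"
    using exists_blocking_prefix[OF assms(2-5) less_imp_le[OF assms(6)] assms(7)] by blast
  show ?thesis
  proof (cases "l + 1 \<le> card (paid_steps cs ls L y)")
    case True
    then show ?thesis using paid_steps_dominate[OF y(1) _ assms(7)] by blast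
  next
    case False
    \<comment> \<open>a tight step paid for by y has level l and fewer payers than approvers of its candidate,
      one of whom, not being a payer, already had l approved members\<close>
    obtain jL where "jL < L" and y_payer: "y \<in> payers cs ls jL"
      and "ls jL \<le> card (paid_steps cs ls L y)"
      and "real (card (payers cs ls jL)) = real (card (paid_steps cs ls L y)) * real n / real k"
      using exists_tight_paid_step[OF assms(1) y(1)] by blast
    with False have "ls jL \<le> l" and size: "real (card (payers cs ls jL)) \<le> real l * real n / real k"
      by (simp_all add: quota_le_iff)
    have "jL < j0"
    proof (rule ccontr)
      assume "\<not> jL < j0"
      then have "card (A y \<inter> cs ` {..<j0}) \<le> card (A y \<inter> cs ` {..<jL})"
        using finite_approvals[OF y(1)] by (intro card_mono) auto
      moreover have "card (A y \<inter> cs ` {..<jL}) < ls jL"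
        using y_payer unfolding payers_def supporters_def by simp
      ultimately show False using y(2) \<open>ls jL \<le> l\<close> by linarith
    qed
    then have "ls jL = l" "score c \<le> score (cs jL)" using before \<open>ls jL \<le> l\<close> by (auto intro: antisym)
    then have "card (payers cs ls jL) < score (cs jL)" using size assms(6) by linarith
    then obtain e where e: "e \<in> {1..n}" "cs jL \<in> A e" "ls jL \<le> card (A e \<inter> cs ` {..<jL})"
      using exists_represented_supporter unfolding payers_def by blast
    define H where "H = insert (cs jL) (A e \<inter> cs ` {..<jL})"
    have "cs jL \<notin> cs ` {..<jL}" using run_eligible[OF \<open>jL < L\<close>] unfolding eligible_def by simp
    then have "card H = Suc (card (A e \<inter> cs ` {..<jL}))"
      unfolding H_def using finite_approvals[OF e(1)] by simp
    moreover have "H \<subseteq> cs ` {..<L}" unfolding H_def using \<open>jL < L\<close> by auto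
    moreover have "\<forall>w\<in>H. score c \<le> score w"
      unfolding H_def using before \<open>jL < j0\<close> \<open>score c \<le> score (cs jL)\<close> by auto
    ultimately show ?thesis using e(3) \<open>ls jL = l\<close> by (intro exI[of _ H]) auto
  qed
qed

lemma exists_dominating_set:
  assumes "c \<in> C" "c \<notin> cs ` {..<L}" "real n / real k < real (score c)"
  shows "\<exists>H\<subseteq>cs ` {..<L}. (\<forall>w\<in>H. score c \<le> score w)
    \<and> real (score c) < real (card H + 1) * real n / real k
    \<and> (L = k \<longrightarrow> real (score c) \<le> real (card H) * real n / real k)"
proof -
  have "real (score c) \<le> real k * (real n / real k)" using score_le_n[of c] k_pos by simp
  moreover have "0 < real n / real k" using n_pos k_pos by simp
  ultimately obtain l where l: "1 \<le> l" "l \<le> k" "real l * (real n / real k) \<le> real (score c)"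
    "real (score c) < real (l + 1) * (real n / real k)"
    using exists_bracketing_multiple assms(3) by blast
  then have lo: "real l * real n / real k \<le> real (score c)"
    and hi: "real (score c) < real (l + 1) * real n / real k" by simp_all
  obtain j0 y where "j0 \<le> L" "l \<le> card (A y \<inter> cs ` {..<j0})"
    and before: "\<And>j. j < j0 \<Longrightarrow> l \<le> ls j \<and> score c \<le> score (cs j)"
    using exists_blocking_prefix[OF assms(1,2) l(1,2) lo hi] by blast
  define H0 where "H0 = A y \<inter> cs ` {..<j0}"
  have H0: "H0 \<subseteq> cs ` {..<L}" "\<forall>w\<in>H0. score c \<le> score w" "l \<le> card H0"
    unfolding H0_def using \<open>j0 \<le> L\<close> before \<open>l \<le> card (A y \<inter> cs ` {..<j0})\<close> by auto
  show ?thesis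
  proof (cases "L = k \<and> real l * real n / real k < real (score c)")
    case True
    then obtain H where "H \<subseteq> cs ` {..<L}" "\<forall>w\<in>H. score c \<le> score w" "l + 1 \<le> card H"
      using exists_large_dominating_set_if_full[OF _ assms(1,2) l(1,2) _ hi] by blast
    moreover have "real (score c) < real (card H) * real n / real k"
      using hi quota_mono[OF \<open>l + 1 \<le> card H\<close>] by linarith
    moreover have "real (card H) * real n / real k \<le> real (card H + 1) * real n / real k"
      by (rule quota_mono) simp
    ultimately show ?thesis by (intro exI[of _ H]) auto
  next
    case False
    have "real (score c) < real (card H0 + 1) * real n / real k"
      using hi quota_mono[of "l + 1" "card H0 + 1"] H0(3) by simp
    moreover have "real (score c) \<le> real (card H0) * real n / real k" if "L = k"
      using False that lo quota_mono[OF H0(3)] by auto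
    ultimately show ?thesis using H0 by (intro exI[of _ H0]) auto
  qed
qed

lemma exists_dominating_block:
  assumes F: "F \<subseteq> C - cs ` {..<L}" "card F = k - L"
    and top: "\<forall>a\<in>F. \<forall>b\<in>(C - cs ` {..<L}) - F. score b \<le> score a"
    and c: "c \<in> C - (cs ` {..<L} \<union> F)" "real n / real k < real (score c)"
  shows "\<exists>B\<subseteq>cs ` {..<L} \<union> F. (\<forall>w\<in>B. score c \<le> score w)
    \<and> real (score c) \<le> real (card B) * real n / real k"
proof -
  obtain H where H: "H \<subseteq> cs ` {..<L}" "\<forall>w\<in>H. score c \<le> score w"
    and hi: "real (score c) < real (card H + 1) * real n / real k"
    and full: "L = k \<longrightarrow> real (score c) \<le> real (card H) * real n / real k"
    using exists_dominating_set[of c] c by auto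
  have "finite H" "H \<inter> F = {}" using H(1) F(1) by (auto intro: finite_subset)
  have "finite F" using finite_subset[OF F(1)] finite_C by simp
  have "real (score c) \<le> real (card (H \<union> F)) * real n / real k"
  proof (cases "F = {}")
    case True
    then show ?thesis using full F(2) run_length_le by simp
  next
    case False
    then have "card H + 1 \<le> card (H \<union> F)"
      using \<open>finite H\<close> \<open>finite F\<close> \<open>H \<inter> F = {}\<close> by (simp add: card_Un_disjoint Suc_le_eq card_gt_0_iff)
    then show ?thesis using hi quota_mono by (meson less_imp_le order_less_le_trans)
  qed
  moreover have "\<forall>w\<in>H \<union> F. score c \<le> score w" using H(2) top c by auto
  ultimately show ?thesis using H(1) by (intro exI[of _ "H \<union> F"]) auto
qed

lemma sum_min_score_ge_fill:
  assumes F: "F \<subseteq> C - cs ` {..<L}" "card F = k - L"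
    and top: "\<forall>a\<in>F. \<forall>b\<in>(C - cs ` {..<L}) - F. score b \<le> score a"
    and c: "c \<in> C - (cs ` {..<L} \<union> F)"
  shows "(2 * sqrt k - 1) * real (score c)
    \<le> (\<Sum>w\<in>cs ` {..<L} \<union> F. min (real (score w)) (real (score c)))"
proof -
  let ?W = "cs ` {..<L} \<union> F" and ?s = "real (score c)"
  have "finite F" using finite_subset[OF F(1)] finite_C by simp
  then have "finite ?W" by simp
  have "card ?W = k" using F by (rule card_run_union_fill)
  have run_ge: "real n / real k \<le> real (score w)" if "w \<in> cs ` {..<L}" for w
    using that score_run_ge by auto
  show ?thesis
  proof (cases "?s \<le> real n / real k")
    case True
    then have "\<forall>w\<in>?W. ?s \<le> real (score w)" using run_ge top c by force
    then have "(\<Sum>w\<in>?W. min (real (score w)) ?s) = real k * ?s"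
      using \<open>card ?W = k\<close> by (simp add: min_absorb2)
    moreover have "(2 * sqrt k - 1) * ?s \<le> real k * ?s"
      using two_sqrt_minus_one_le[of k] by (intro mult_right_mono) simp_all
    ultimately show ?thesis by simp
  next
    case False
    then have "real n / real k < ?s" by simp
    then obtain B where B: "B \<subseteq> ?W" "\<forall>w\<in>B. score c \<le> score w"
      "?s \<le> real (card B) * real n / real k"
      using exists_dominating_block[OF F top c] by blast
    have "real n / real k \<le> real (score w)" if "w \<in> ?W" for w
    proof (cases "w \<in> F")
      case True
      then show ?thesis using top c False by force
    qed (use that run_ge in auto)
    then have "(2 * sqrt (card ?W) - 1) * ?s \<le> (\<Sum>w\<in>?W. min (real (score w)) ?s)"
      using B \<open>finite ?W\<close> False n_pos k_pos
      by (intro sum_min_ge_sqrt_bound[where x = "real n / real k" and B = B]) auto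
    then show ?thesis using \<open>card ?W = k\<close> by simp
  qed
qed

lemma util_ratio_ge_fill:
  assumes F: "F \<subseteq> C - cs ` {..<L}" "card F = k - L"
    and top: "\<forall>a\<in>F. \<forall>b\<in>(C - cs ` {..<L}) - F. score b \<le> score a"
  shows "2 / sqrt k - 1 / real k \<le> util_ratio C n A k (cs ` {..<L} \<union> F)"
proof -
  let ?W = "cs ` {..<L} \<union> F"
  define s where "s = Max (insert 0 (score ` (C - ?W)))"
  have "finite (C - ?W)" using finite_C by simp
  then have outside: "\<forall>c\<in>C - ?W. real (score c) \<le> real s" unfolding s_def by simp
  have "s \<in> insert 0 (score ` (C - ?W))" unfolding s_def using \<open>finite (C - ?W)\<close> by (intro Max_in) auto
  have "(2 / sqrt k - 1 / real k) * real k * real s = (2 * sqrt k - 1) * real s"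
    using sqrt_ratio_bounds(1)[OF k_pos] by simp
  also from \<open>s \<in> insert 0 (score ` (C - ?W))\<close>
  have "\<dots> \<le> (\<Sum>w\<in>?W. min (real (score w)) (real s))"
  proof
    assume "s = 0"
    then show ?thesis by (simp add: sum_nonneg)
  qed (use sum_min_score_ge_fill[OF F top] in auto)
  finally have "(2 / sqrt k - 1 / real k) * real k * real s
      \<le> (\<Sum>w\<in>?W. min (real (score w)) (real s))" .
  moreover have "?W \<subseteq> C" using F(1) run_subset by auto
  ultimately show ?thesis
    using util_ratio_ge[OF _ outside _ sqrt_ratio_bounds(2,3)[OF k_pos]] by simp
qed

lemma good_committee_with_room:
  assumes "L + t \<le> k" "1 \<le> t" "2 * sqrt k - 1 \<le> real t" "real t \<le> 2 * sqrt k"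
  shows "\<exists>W. committee C k W \<and> EJR_plus n A k W \<and> 3/4 - 2 / sqrt k \<le> rep_ratio C n A k W
    \<and> 2 / sqrt k - 1 / real k \<le> util_ratio C n A k W"
proof -
  let ?WG = "cs ` {..<L}"
  have fin: "finite (C - ?WG)" and card: "t \<le> card (C - ?WG)"
    using finite_C card_Diff_subset[OF _ run_subset] card_run k_le_card assms(1) by auto
  obtain F where F: "F \<subseteq> C - ?WG" "card F = t"
    and top: "\<forall>a\<in>F. \<forall>b\<in>(C - ?WG) - F. score b \<le> score a"
    using exists_subset_top_values[OF fin card, of score] by blast
  obtain R where R: "R \<subseteq> C" "card R = k - L - t"
    and rep: "\<And>W. ?WG \<union> R \<subseteq> W \<Longrightarrow> 3/4 - 2 / sqrt k \<le> rep_ratio C n A k W"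
    using exists_subfamily_rep_ratio_with_room[OF assms(1,4)] by blast
  define W where "W = ?WG \<union> F \<union> R"
  have "W \<subseteq> C" unfolding W_def using run_subset F(1) R(1) by auto
  have "card W \<le> card (?WG \<union> F) + card R" unfolding W_def by (rule card_Un_le)
  also have "\<dots> \<le> card ?WG + card F + card R" using card_Un_le[of ?WG F] by simp
  finally have "card W \<le> card ?WG + card F + card R" .
  then have "committee C k W"
    unfolding committee_def using \<open>W \<subseteq> C\<close> card_run F(2) R(2) assms(1) by simp
  moreover have "2 / sqrt k - 1 / real k \<le> util_ratio C n A k W"
    using \<open>W \<subseteq> C\<close> F assms(2,3) top
    by (intro util_ratio_ge_top_block[where F = F]) (auto simp: W_def)
  moreover have "EJR_plus n A k W" unfolding W_def by (rule EJR_plus_superset) auto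
  moreover have "3/4 - 2 / sqrt k \<le> rep_ratio C n A k W" unfolding W_def by (rule rep) auto
  ultimately show ?thesis by blast
qed

lemma good_committee_without_room:
  assumes "k < L + t" "real t \<le> 2 * sqrt k"
  shows "\<exists>W. committee C k W \<and> EJR_plus n A k W \<and> 3/4 - 2 / sqrt k \<le> rep_ratio C n A k W
    \<and> 2 / sqrt k - 1 / real k \<le> util_ratio C n A k W"
proof -
  let ?WG = "cs ` {..<L}"
  have fin: "finite (C - ?WG)" and card: "k - L \<le> card (C - ?WG)"
    using finite_C card_Diff_subset[OF _ run_subset] card_run k_le_card by auto
  obtain F where F: "F \<subseteq> C - ?WG" "card F = k - L"
    and top: "\<forall>a\<in>F. \<forall>b\<in>(C - ?WG) - F. score b \<le> score a"
    using exists_subset_top_values[OF fin card, of score] by blast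
  let ?W = "?WG \<union> F"
  have "?W \<subseteq> C" using F(1) run_subset by blast
  then have "committee C k ?W" unfolding committee_def using card_run_union_fill[OF F] by simp
  moreover have "EJR_plus n A k ?W" using EJR_plus_superset by simp
  moreover have "3/4 - 2 / sqrt k \<le> rep_ratio C n A k ?W"
    using assms by (rule rep_ratio_ge_without_room) simp
  moreover have "2 / sqrt k - 1 / real k \<le> util_ratio C n A k ?W"
    using F top by (rule util_ratio_ge_fill)
  ultimately show ?thesis by blast
qed

end

end

lemma greedy_run_snoc:
  assumes "greedy_run cs ls L" "\<forall>j<L. l \<le> ls j" "1 \<le> l" "l \<le> k"
    and "eligible (cs ` {..<L}) l c" "\<forall>c'. eligible (cs ` {..<L}) l c' \<longrightarrow> score c' \<le> score c"
  shows "greedy_run (cs(L := c)) (ls(L := l)) (Suc L)"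
proof -
  have prefix: "(cs(L := c)) ` {..<j} = cs ` {..<j}" if "j \<le> L" for j
    using that by (intro image_cong) auto
  have "1 \<le> (ls(L := l)) j \<and> (ls(L := l)) j \<le> k
      \<and> eligible ((cs(L := c)) ` {..<j}) ((ls(L := l)) j) ((cs(L := c)) j)
      \<and> (\<forall>c'. eligible ((cs(L := c)) ` {..<j}) ((ls(L := l)) j) c'
            \<longrightarrow> score c' \<le> score ((cs(L := c)) j))" if "j < Suc L" for j
  proof (cases "j = L")
    case True
    then show ?thesis using assms(3-6) prefix[of L] by simp
  next
    case False
    then have "j < L" using that by simp
    then show ?thesis using assms(1) prefix[of j] False unfolding greedy_run_def by simp
  qed
  moreover have "(ls(L := l)) j' \<le> (ls(L := l)) j" if "j \<le> j'" "j' < Suc L" for j j'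
  proof (cases "j' = L")
    case True
    then show ?thesis using that assms(2) by (cases "j = L") auto
  next
    case False
    then have "j' < L" "j \<noteq> L" using that by auto
    then show ?thesis using that(1) run_level_antimono[OF assms(1)] by simp
  qed
  ultimately show ?thesis unfolding greedy_run_def by blast
qed

lemma exhausted_above_snoc:
  assumes "exhausted_above l cs ls L"
  shows "exhausted_above l (cs(L := c)) (ls(L := l)) (Suc L)"
  unfolding exhausted_above_def
proof (intro allI impI)
  fix j l' c' assume j: "j \<le> Suc L" and l': "l < l'" "l' \<le> k"
    and current: "j < Suc L \<longrightarrow> (ls(L := l)) j < l'"
  have prefix: "(cs(L := c)) ` {..<j} = cs ` {..<j}" if "j \<le> L" for j
    using that by (intro image_cong) auto
  show "\<not> eligible ((cs(L := c)) ` {..<j}) l' c'"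
  proof (cases "j = Suc L")
    case True
    have "\<not> eligible (cs ` {..<L}) l' c'" using assms l' unfolding exhausted_above_def by auto
    moreover have "cs ` {..<L} \<subseteq> (cs(L := c)) ` {..<j}"
      using prefix[of L] True image_mono[of "{..<L}" "{..<Suc L}" "cs(L := c)"] by auto
    ultimately show ?thesis using eligible_antimono by blast
  next
    case False
    then have "j \<le> L" "j < L \<longrightarrow> ls j < l'" using j current by auto
    then show ?thesis using assms l' prefix unfolding exhausted_above_def by auto
  qed
qed

lemma exhausted_above_pred:
  assumes "exhausted_above l cs ls L" "\<forall>j<L. l \<le> ls j" "1 \<le> l"
    and "\<forall>c. \<not> eligible (cs ` {..<L}) l c"
  shows "exhausted_above (l - 1) cs ls L"
  unfolding exhausted_above_def
proof (intro allI impI)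
  fix j l' c assume j: "j \<le> L" and l': "l - 1 < l'" "l' \<le> k" and current: "j < L \<longrightarrow> ls j < l'"
  show "\<not> eligible (cs ` {..<j}) l' c"
  proof (cases "l < l'")
    case True
    then show ?thesis using assms(1) j l'(2) current unfolding exhausted_above_def by blast
  next
    case False
    then have "l' = l" using l' assms(3) by simp
    then have "j = L" using j current assms(2) by (cases "j < L") auto
    then show ?thesis using assms(4) \<open>l' = l\<close> by simp
  qed
qed

lemma exists_run_exhausting_level:
  assumes "1 \<le> l" "l \<le> k"
  shows "greedy_run cs ls L \<Longrightarrow> \<forall>j<L. l \<le> ls j \<Longrightarrow> exhausted_above l cs ls L \<Longrightarrow>
    \<exists>cs' ls' L'. greedy_run cs' ls' L' \<and> (\<forall>j<L'. l \<le> ls' j) \<and> exhausted_above (l - 1) cs' ls' L'"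
proof (induction "k - L" arbitrary: cs ls L rule: less_induct)
  case less
  show ?case
  proof (cases "\<exists>c. eligible (cs ` {..<L}) l c")
    case False
    then show ?thesis using less.prems assms(1) exhausted_above_pred by blast
  next
    case True
    then obtain c where c: "eligible (cs ` {..<L}) l c"
      "\<forall>c'. eligible (cs ` {..<L}) l c' \<longrightarrow> score c' \<le> score c"
      using exists_max_score_eligible by blast
    have extended: "greedy_run (cs(L := c)) (ls(L := l)) (Suc L)"
      using greedy_run_snoc[OF less.prems(1,2) assms c] .
    moreover have "\<forall>j<Suc L. l \<le> (ls(L := l)) j" using less.prems(2) by (auto simp: less_Suc_eq)
    moreover have "exhausted_above l (cs(L := c)) (ls(L := l)) (Suc L)"
      using less.prems(3) by (rule exhausted_above_snoc)
    moreover have "k - Suc L < k - L" using run_length_le[OF extended] by simp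
    ultimately show ?thesis using less.hyps by blast
  qed
qed

lemma exists_exhausted_run: "\<exists>cs ls L. greedy_run cs ls L \<and> exhausted_above 0 cs ls L"
proof -
  have "\<exists>cs ls L. greedy_run cs ls L \<and> (\<forall>j<L. k - d \<le> ls j) \<and> exhausted_above (k - d) cs ls L"
    if "d \<le> k" for d
    using that
  proof (induction d)
    case 0
    have "greedy_run (\<lambda>_. undefined) (\<lambda>_. 0) 0" "exhausted_above k (\<lambda>_. undefined) (\<lambda>_. 0) 0"
      unfolding greedy_run_def exhausted_above_def by simp_all
    then show ?case by auto
  next
    case (Suc d)
    then obtain cs ls L where "greedy_run cs ls L" and "\<forall>j<L. k - d \<le> ls j"
      and "exhausted_above (k - d) cs ls L"
      by auto
    moreover have "1 \<le> k - d" "k - d \<le> k" using Suc.prems by auto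
    ultimately obtain cs' ls' L' where "greedy_run cs' ls' L'" and levels: "\<forall>j<L'. k - d \<le> ls' j"
      and "exhausted_above (k - d - 1) cs' ls' L'"
      using exists_run_exhausting_level by blast
    moreover have "k - d - 1 = k - Suc d" by simp
    moreover have "\<forall>j<L'. k - Suc d \<le> ls' j"
    proof (intro allI impI)
      fix j assume "j < L'"
      then have "k - d \<le> ls' j" using levels by simp
      then show "k - Suc d \<le> ls' j" by linarith
    qed
    ultimately show ?case by metis
  qed
  from this[of k] show ?thesis by auto
qed

end

theorem theorem7:
  fixes C :: "'c set" and n :: nat and A :: "nat \<Rightarrow> 'c set" and k :: nat
  assumes "is_instance C n A k"
  shows "\<exists>W. committee C k W \<and> EJR_plus n A k W
           \<and> rep_ratio C n A k W \<ge> 3/4 - 2 / sqrt (real k)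
           \<and> util_ratio C n A k W \<ge> 2 / sqrt (real k) - 1 / real k"
proof -
  interpret approval_instance C n A k using assms by unfold_locales
  obtain cs ls L where run: "greedy_run cs ls L" and exhausted: "exhausted_above 0 cs ls L"
    using exists_exhausted_run by blast
  have "1 \<le> sqrt k" using k_pos by simp
  then have "1 \<le> 2 * sqrt k" by linarith
  then obtain t where t: "1 \<le> t" "2 * sqrt k - 1 \<le> real t" "real t \<le> 2 * sqrt k"
    by (rule exists_nat_floor_bounds)
  show ?thesis
  proof (cases "L + t \<le> k")
    case True
    then show ?thesis using good_committee_with_room[OF run exhausted True t] by simp
  next
    case False
    then show ?thesis using good_committee_without_room[OF run exhausted _ t(3)] by simp
  qed
qed

end
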